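(* Let $S$ be a monoid and $G_1,G_2$ left $S$-acts such that there exist sets $I,J$ and injective homomorphisms $G_1\rightarrowtail G_2^I$ and $G_2\rightarrowtail G_1^J$. Then $G_1$ and $G_2$ are geometrically equivalent.
   Context: A left $S$-act is a nonempty set with an action $S\times A\to A$ satisfying $1a=a$, $(st)a=s(ta)$; homomorphisms preserve the action; $G^I$ is the cartesian power with componentwise action. For a nonempty finite set $X$, $F_X=\coprod_{x\in X}S_x$ is the free $S$-act on $X$. For an $S$-act $G$ and a relation $T\subseteq F_X\times F_X$, $T'_G=\{\mu:F_X\to G \text{ homomorphism}: T\subseteq\ker\mu\}$ and $T''_G=\bigcap_{\mu\in T'_G}\ker\mu$ (empty intersection $=F_X\times F_X$). $S$-acts $G_1,G_2$ are geometrically equivalent iff $T''_{G_1}=T''_{G_2}$ for all nonempty finite $X$ and all $T\subseteq F_X\times F_X$. *)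

theory Defs
  imports "HOL-Library.FuncSet"
begin

definition is_act :: "'a set \<Rightarrow> ('s::monoid_mult \<Rightarrow> 'a \<Rightarrow> 'a) \<Rightarrow> bool" where
  "is_act A act \<longleftrightarrow> A \<noteq> {} \<and> (\<forall>s. \<forall>a\<in>A. act s a \<in> A)
     \<and> (\<forall>a\<in>A. act 1 a = a) \<and> (\<forall>s t. \<forall>a\<in>A. act (s * t) a = act s (act t a))"

definition act_hom :: "'a set \<Rightarrow> ('s::monoid_mult \<Rightarrow> 'a \<Rightarrow> 'a) \<Rightarrow> 'b set \<Rightarrow> ('s \<Rightarrow> 'b \<Rightarrow> 'b)
    \<Rightarrow> ('a \<Rightarrow> 'b) \<Rightarrow> bool" where
  "act_hom A act B act' f \<longleftrightarrow> (\<forall>a\<in>A. f a \<in> B) \<and> (\<forall>s. \<forall>a\<in>A. f (act s a) = act' s (f a))"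

definition pow_carrier :: "'i set \<Rightarrow> 'a set \<Rightarrow> ('i \<Rightarrow> 'a) set" where
  "pow_carrier I A = (\<Pi>\<^sub>E i\<in>I. A)"

definition pow_act :: "'i set \<Rightarrow> ('s \<Rightarrow> 'a \<Rightarrow> 'a) \<Rightarrow> 's \<Rightarrow> ('i \<Rightarrow> 'a) \<Rightarrow> ('i \<Rightarrow> 'a)" where
  "pow_act I act s g = (\<lambda>i\<in>I. act s (g i))"

text \<open>Free act F_X on X: the pair (x, s) stands for the element s x of the copy S_x.\<close>

definition free_carrier :: "'x set \<Rightarrow> ('x \<times> 's) set" where
  "free_carrier X = X \<times> UNIV"

definition free_act :: "'s::monoid_mult \<Rightarrow> ('x \<times> 's) \<Rightarrow> ('x \<times> 's)" where
  "free_act t p = (fst p, t * snd p)"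

definition ker_on :: "'a set \<Rightarrow> ('a \<Rightarrow> 'b) \<Rightarrow> ('a \<times> 'a) set" where
  "ker_on A f = {(a, b). a \<in> A \<and> b \<in> A \<and> f a = f b}"

definition T_prime :: "'x set \<Rightarrow> (('x \<times> 's::monoid_mult) \<times> ('x \<times> 's)) set
    \<Rightarrow> 'a set \<Rightarrow> ('s \<Rightarrow> 'a \<Rightarrow> 'a) \<Rightarrow> (('x \<times> 's) \<Rightarrow> 'a) set" where
  "T_prime X T A act = {\<mu>. act_hom (free_carrier X) free_act A act \<mu> \<and> T \<subseteq> ker_on (free_carrier X) \<mu>}"

text \<open>T''_G: intersection of the kernels (empty intersection = F_X x F_X).\<close>

definition T_dprime :: "'x set \<Rightarrow> (('x \<times> 's::monoid_mult) \<times> ('x \<times> 's)) set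
    \<Rightarrow> 'a set \<Rightarrow> ('s \<Rightarrow> 'a \<Rightarrow> 'a) \<Rightarrow> (('x \<times> 's) \<times> ('x \<times> 's)) set" where
  "T_dprime X T A act = (free_carrier X \<times> free_carrier X) \<inter>
      (\<Inter>\<mu>\<in>T_prime X T A act. ker_on (free_carrier X) \<mu>)"

definition geom_equiv :: "'a set \<Rightarrow> ('s::monoid_mult \<Rightarrow> 'a \<Rightarrow> 'a) \<Rightarrow> 'b set \<Rightarrow> ('s \<Rightarrow> 'b \<Rightarrow> 'b) \<Rightarrow> bool" where
  "geom_equiv A1 act1 A2 act2 \<longleftrightarrow>
     (\<forall>X :: nat set. finite X \<and> X \<noteq> {} \<longrightarrow>
        (\<forall>T. T \<subseteq> free_carrier X \<times> free_carrier X \<longrightarrow>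
           T_dprime X T A1 act1 = T_dprime X T A2 act2))"

end

theory Submission
  imports Defs
begin

text \<open>An act \<open>G\<^sub>1\<close> that embeds into a power of \<open>G\<^sub>2\<close> is separated by homomorphisms into \<open>G\<^sub>2\<close>
  (compose the embedding with the projections). Composing a point \<open>\<mu>\<close> of \<open>T'\<^sub>G\<^sub>1\<close> with these
  separating homomorphisms yields points of \<open>T'\<^sub>G\<^sub>2\<close>, so every pair identified by all of
  \<open>T'\<^sub>G\<^sub>2\<close> is identified by \<open>\<mu>\<close>; hence \<open>T''\<^sub>G\<^sub>2 \<subseteq> T''\<^sub>G\<^sub>1\<close>, and by symmetry equality holds.\<close>

definition act_separated_by ::
    "'a set \<Rightarrow> ('s::monoid_mult \<Rightarrow> 'a \<Rightarrow> 'a) \<Rightarrow> 'b set \<Rightarrow> ('s \<Rightarrow> 'b \<Rightarrow> 'b) \<Rightarrow> bool" where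
  "act_separated_by A act B act' \<longleftrightarrow>
     (\<forall>a\<in>A. \<forall>b\<in>A. a \<noteq> b \<longrightarrow> (\<exists>h. act_hom A act B act' h \<and> h a \<noteq> h b))"

lemma act_hom_comp:
  assumes "act_hom A act B act' f" and "act_hom B act' C act'' g"
  shows "act_hom A act C act'' (g \<circ> f)"
  using assms unfolding act_hom_def by auto

lemma act_hom_pow_proj:
  assumes "i \<in> I"
  shows "act_hom (pow_carrier I A) (pow_act I act) A act (\<lambda>x. x i)"
  using assms unfolding act_hom_def pow_carrier_def pow_act_def by auto

lemma act_separated_by_inj_into_pow:
  assumes hom: "act_hom A act (pow_carrier I B) (pow_act I act') f" and inj: "inj_on f A"
  shows "act_separated_by A act B act'"
  unfolding act_separated_by_def
proof (intro ballI impI)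
  fix a b assume ab: "a \<in> A" "b \<in> A" "a \<noteq> b"
  then have "f a \<noteq> f b" using inj by (auto dest: inj_onD)
  moreover have "f a \<in> (\<Pi>\<^sub>E i\<in>I. B)" "f b \<in> (\<Pi>\<^sub>E i\<in>I. B)"
    using hom ab unfolding act_hom_def pow_carrier_def by auto
  ultimately obtain i where "i \<in> I" "f a i \<noteq> f b i"
    by (metis PiE_ext)
  then show "\<exists>h. act_hom A act B act' h \<and> h a \<noteq> h b"
    using act_hom_comp[OF hom act_hom_pow_proj] by (intro exI[of _ "(\<lambda>x. x i) \<circ> f"]) auto
qed

lemma T_prime_comp:
  assumes "\<mu> \<in> T_prime X T A act" and "act_hom A act B act' h"
  shows "h \<circ> \<mu> \<in> T_prime X T B act'"
  using assms act_hom_comp unfolding T_prime_def ker_on_def by fastforce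

lemma T_dprime_antimono:
  assumes sep: "act_separated_by A act B act'"
  shows "T_dprime X T B act' \<subseteq> T_dprime X T A act"
proof
  fix pq assume pq: "pq \<in> T_dprime X T B act'"
  then obtain p q where pq_eq: "pq = (p, q)" and
    pF: "p \<in> free_carrier X" and qF: "q \<in> free_carrier X"
    unfolding T_dprime_def by auto
  have "\<mu> p = \<mu> q" if \<mu>: "\<mu> \<in> T_prime X T A act" for \<mu>
  proof (rule ccontr)
    assume "\<mu> p \<noteq> \<mu> q"
    moreover have "\<mu> p \<in> A" "\<mu> q \<in> A"
      using \<mu> pF qF unfolding T_prime_def act_hom_def by auto
    ultimately obtain h where h: "act_hom A act B act' h" "h (\<mu> p) \<noteq> h (\<mu> q)"
      using sep unfolding act_separated_by_def by blast
    have "h \<circ> \<mu> \<in> T_prime X T B act'" using T_prime_comp[OF \<mu> h(1)] .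
    then have "h (\<mu> p) = h (\<mu> q)"
      using pq pq_eq unfolding T_dprime_def ker_on_def by auto
    with h(2) show False ..
  qed
  then show "pq \<in> T_dprime X T A act"
    using pq_eq pF qF unfolding T_dprime_def ker_on_def by auto
qed

theorem corollary3p5:
  fixes A1 :: "'a set" and act1 :: "'s::monoid_mult \<Rightarrow> 'a \<Rightarrow> 'a"
    and A2 :: "'b set" and act2 :: "'s \<Rightarrow> 'b \<Rightarrow> 'b"
    and I :: "'i set" and J :: "'j set"
    and f :: "'a \<Rightarrow> ('i \<Rightarrow> 'b)" and g :: "'b \<Rightarrow> ('j \<Rightarrow> 'a)"
  assumes "is_act A1 act1" and "is_act A2 act2"
    and "act_hom A1 act1 (pow_carrier I A2) (pow_act I act2) f" and "inj_on f A1"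
    and "act_hom A2 act2 (pow_carrier J A1) (pow_act J act1) g" and "inj_on g A2"
  shows "geom_equiv A1 act1 A2 act2"
proof -
  have "act_separated_by A1 act1 A2 act2" "act_separated_by A2 act2 A1 act1"
    using act_separated_by_inj_into_pow assms(3-6) by blast+
  then show ?thesis
    unfolding geom_equiv_def by (metis T_dprime_antimono equalityI)
qed

end
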